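(* Let $F$ be a generalised clause-set, and let a generic translation $(T,\gamma)$ of $F$ be given. Then the boolean clause-set $T_\gamma(F)$ is satisfiable if and only if $F$ is satisfiable.
   Context: A generalised clause-set $F$ is a finite set of clauses over variables $v$, each with a finite non-empty domain $D_v$; a clause is a finite set of literals of the form "$v\ne\varepsilon$" with $\varepsilon\in D_v$; $\mathrm{var}(F)$ is the set of variables occurring in $F$. An assignment $\varphi$ maps each $v\in\mathrm{var}(F)$ to a value in $D_v$; it satisfies the literal "$v\ne\varepsilon$" if $\varphi(v)\ne\varepsilon$, a clause if it satisfies some literal of it, and $F$ if it satisfies every clause. Boolean clauses are finite sets of boolean literals (variables or their negations), satisfied by a boolean assignment if some literal is true; a boolean clause-set is satisfiable if some assignment satisfies all its clauses. A generic translation of $F$ consists of: for each $v\in\mathrm{var}(F)$ an unsatisfiable boolean clause-set $T(v)$, such that $T(v),T(w)$ have no variables in common for $v\ne w$; and for each $v$ an injective map $\gamma_v:D_v\to T(v)$ such that for every $\varepsilon\in D_v$ the clause-set $T(v)\setminus\{\gamma_v(\varepsilon)\}$ is satisfiable. Then $T_\gamma(F)$ consists of, for each clause $C\in F$, the boolean clause $\bigcup_{(v\ne\varepsilon)\in C}\gamma_v(\varepsilon)$, together with, for each $v\in\mathrm{var}(F)$, all clauses of $T(v)\setminus\{\gamma_v(\varepsilon):\varepsilon\in D_v\}$. *)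

theory Defs
  imports Main
begin

text \<open>A literal "v \<noteq> e" is the pair (v, e).\<close>

type_synonym ('v, 'e) glit = "'v \<times> 'e"
type_synonym ('v, 'e) gclause = "('v, 'e) glit set"
type_synonym ('v, 'e) gcls = "('v, 'e) gclause set"

definition gvar :: "('v, 'e) gcls \<Rightarrow> 'v set" where
  "gvar F = fst ` (\<Union>F)"

definition gclause_set :: "('v \<Rightarrow> 'e set) \<Rightarrow> ('v, 'e) gcls \<Rightarrow> bool" where
  "gclause_set D F \<longleftrightarrow> finite F \<and> (\<forall>C\<in>F. finite C) \<and>
     (\<forall>C\<in>F. \<forall>(v, e)\<in>C. e \<in> D v) \<and>
     (\<forall>v\<in>gvar F. finite (D v) \<and> D v \<noteq> {})"

definition gsat_assign :: "('v \<Rightarrow> 'e set) \<Rightarrow> ('v, 'e) gcls \<Rightarrow> ('v \<Rightarrow> 'e) \<Rightarrow> bool" where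
  "gsat_assign D F \<phi> \<longleftrightarrow> (\<forall>v\<in>gvar F. \<phi> v \<in> D v) \<and>
     (\<forall>C\<in>F. \<exists>(v, e)\<in>C. \<phi> v \<noteq> e)"

definition gsatisfiable :: "('v \<Rightarrow> 'e set) \<Rightarrow> ('v, 'e) gcls \<Rightarrow> bool" where
  "gsatisfiable D F \<longleftrightarrow> (\<exists>\<phi>. gsat_assign D F \<phi>)"

text \<open>Boolean clauses: a literal is (x, True) for x and (x, False) for its negation.\<close>
type_synonym 'b blit = "'b \<times> bool"
type_synonym 'b bclause = "'b blit set"
type_synonym 'b bcls = "'b bclause set"

definition bvar :: "'b bcls \<Rightarrow> 'b set" where
  "bvar S = fst ` (\<Union>S)"

definition bclause_set :: "'b bcls \<Rightarrow> bool" where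
  "bclause_set S \<longleftrightarrow> finite S \<and> (\<forall>C\<in>S. finite C)"

definition bsatisfiable :: "'b bcls \<Rightarrow> bool" where
  "bsatisfiable S \<longleftrightarrow> (\<exists>\<beta>. \<forall>C\<in>S. \<exists>(x, p)\<in>C. \<beta> x = p)"

definition generic_translation ::
  "('v \<Rightarrow> 'e set) \<Rightarrow> ('v, 'e) gcls \<Rightarrow> ('v \<Rightarrow> 'b bcls) \<Rightarrow> ('v \<Rightarrow> 'e \<Rightarrow> 'b bclause) \<Rightarrow> bool" where
  "generic_translation D F T \<gamma> \<longleftrightarrow>
     (\<forall>v\<in>gvar F. bclause_set (T v) \<and> \<not> bsatisfiable (T v)) \<and>
     (\<forall>v\<in>gvar F. \<forall>w\<in>gvar F. v \<noteq> w \<longrightarrow> bvar (T v) \<inter> bvar (T w) = {}) \<and>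
     (\<forall>v\<in>gvar F. inj_on (\<gamma> v) (D v) \<and> \<gamma> v ` D v \<subseteq> T v) \<and>
     (\<forall>v\<in>gvar F. \<forall>e\<in>D v. bsatisfiable (T v - {\<gamma> v e}))"

definition translate ::
  "('v \<Rightarrow> 'e set) \<Rightarrow> ('v, 'e) gcls \<Rightarrow> ('v \<Rightarrow> 'b bcls) \<Rightarrow> ('v \<Rightarrow> 'e \<Rightarrow> 'b bclause) \<Rightarrow> 'b bcls" where
  "translate D F T \<gamma> =
     (\<lambda>C. \<Union>(v, e)\<in>C. \<gamma> v e) ` F \<union> (\<Union>v\<in>gvar F. T v - \<gamma> v ` D v)"

end

theory Submission
  imports Defs
begin

text \<open>If the boolean translation is satisfied by \<beta>, then each unsatisfiable \<open>T v\<close> has a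
  clause falsified by \<beta>; all clauses of \<open>T v\<close> outside the image of \<open>\<gamma> v\<close> belong to the
  translation, so the falsified clause is \<open>\<gamma> v \<epsilon>\<close> for some value \<epsilon>, and \<open>v \<mapsto> \<epsilon>\<close> satisfies F.
  Conversely, given \<phi> satisfying F, satisfy each \<open>T v - {\<gamma> v (\<phi> v)}\<close> separately and glue the
  assignments, which is possible since the \<open>T v\<close> have disjoint variables; by injectivity of
  \<open>\<gamma> v\<close>, every literal \<open>v \<noteq> \<epsilon>\<close> made true by \<phi> is translated to a clause \<open>\<gamma> v \<epsilon>\<close> that is kept.\<close>

definition bsat_clause :: "('b \<Rightarrow> bool) \<Rightarrow> 'b bclause \<Rightarrow> bool" where
  "bsat_clause \<beta> C \<longleftrightarrow> (\<exists>(x, p)\<in>C. \<beta> x = p)"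

definition bmodels :: "('b \<Rightarrow> bool) \<Rightarrow> 'b bcls \<Rightarrow> bool" where
  "bmodels \<beta> S \<longleftrightarrow> (\<forall>C\<in>S. bsat_clause \<beta> C)"

lemma bsatisfiable_iff_bmodels: "bsatisfiable S \<longleftrightarrow> (\<exists>\<beta>. bmodels \<beta> S)"
  unfolding bsatisfiable_def bmodels_def bsat_clause_def by (rule refl)

lemma bsat_clause_mono: "bsat_clause \<beta> C \<Longrightarrow> C \<subseteq> C' \<Longrightarrow> bsat_clause \<beta> C'"
  unfolding bsat_clause_def by auto

lemma bsat_clause_cong:
  assumes "\<forall>x\<in>fst ` C. \<beta> x = \<beta>' x"
  shows "bsat_clause \<beta> C \<longleftrightarrow> bsat_clause \<beta>' C"
  unfolding bsat_clause_def using assms by (intro bex_cong refl) (auto split: prod.splits)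

lemma bmodels_cong:
  assumes "\<forall>x\<in>bvar S. \<beta> x = \<beta>' x"
  shows "bmodels \<beta> S \<longleftrightarrow> bmodels \<beta>' S"
  unfolding bmodels_def using assms
  by (intro ball_cong refl bsat_clause_cong) (auto simp: bvar_def)

lemma ex_fun_agreeing_on_disjoint_family:
  assumes "\<forall>i\<in>I. \<forall>j\<in>I. i \<noteq> j \<longrightarrow> A i \<inter> A j = {}"
  shows "\<exists>f. \<forall>i\<in>I. \<forall>x\<in>A i. f x = g i x"
proof (intro exI ballI)
  fix i x assume i: "i \<in> I" and x: "x \<in> A i"
  have "(SOME j. j \<in> I \<and> x \<in> A j) = i"
    using assms i x by (intro some_equality) blast+
  then show "g (SOME j. j \<in> I \<and> x \<in> A j) x = g i x" by simp
qed

lemma translate_clause_mem: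
  "C \<in> F \<Longrightarrow> (\<Union>(v, e)\<in>C. \<gamma> v e) \<in> translate D F T \<gamma>"
  unfolding translate_def by blast

lemma translate_bsatisfiable_imp_gsatisfiable:
  assumes unsat: "\<forall>v\<in>gvar F. \<not> bsatisfiable (T v)"
    and "bsatisfiable (translate D F T \<gamma>)"
  shows "gsatisfiable D F"
proof -
  obtain \<beta> where \<beta>: "bmodels \<beta> (translate D F T \<gamma>)"
    using assms(2) unfolding bsatisfiable_iff_bmodels by blast
  have "\<exists>e\<in>D v. \<not> bsat_clause \<beta> (\<gamma> v e)" if v: "v \<in> gvar F" for v
  proof -
    have "\<not> bmodels \<beta> (T v)"
      using unsat v unfolding bsatisfiable_iff_bmodels by blast
    then obtain C where C: "C \<in> T v" "\<not> bsat_clause \<beta> C"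
      unfolding bmodels_def by blast
    have "C \<notin> T v - \<gamma> v ` D v"
      using \<beta> C v unfolding translate_def bmodels_def by blast
    with C show ?thesis by blast
  qed
  then obtain \<phi> where \<phi>: "\<forall>v\<in>gvar F. \<phi> v \<in> D v \<and> \<not> bsat_clause \<beta> (\<gamma> v (\<phi> v))"
    using bchoice[of "gvar F" "\<lambda>v e. e \<in> D v \<and> \<not> bsat_clause \<beta> (\<gamma> v e)"] by blast
  have "\<exists>(v, e)\<in>C. \<phi> v \<noteq> e" if C: "C \<in> F" for C
  proof -
    have "bsat_clause \<beta> (\<Union>(v, e)\<in>C. \<gamma> v e)"
      using \<beta> translate_clause_mem[OF C] unfolding bmodels_def by blast
    then obtain v e where ve: "(v, e) \<in> C" "bsat_clause \<beta> (\<gamma> v e)"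
      unfolding bsat_clause_def by blast
    then have "v \<in> gvar F" using C unfolding gvar_def by force
    with \<phi> ve have "\<phi> v \<noteq> e" by blast
    with ve(1) show ?thesis by blast
  qed
  with \<phi> show ?thesis unfolding gsatisfiable_def gsat_assign_def by blast
qed

lemma gsatisfiable_imp_translate_bsatisfiable:
  assumes "gclause_set D F" and "generic_translation D F T \<gamma>"
    and "gsatisfiable D F"
  shows "bsatisfiable (translate D F T \<gamma>)"
proof -
  have disjoint: "\<forall>v\<in>gvar F. \<forall>w\<in>gvar F. v \<noteq> w \<longrightarrow> bvar (T v) \<inter> bvar (T w) = {}"
    and inj: "\<And>v. v \<in> gvar F \<Longrightarrow> inj_on (\<gamma> v) (D v)"
    and codes: "\<And>v. v \<in> gvar F \<Longrightarrow> \<gamma> v ` D v \<subseteq> T v"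
    and sat_minus: "\<And>v e. v \<in> gvar F \<Longrightarrow> e \<in> D v \<Longrightarrow> bsatisfiable (T v - {\<gamma> v e})"
    using assms(2) unfolding generic_translation_def by (elim conjE; simp)+
  obtain \<phi> where \<phi>: "gsat_assign D F \<phi>"
    using assms(3) unfolding gsatisfiable_def by blast
  then have \<phi>_dom: "\<And>v. v \<in> gvar F \<Longrightarrow> \<phi> v \<in> D v"
    unfolding gsat_assign_def by blast
  define R where "R v = T v - {\<gamma> v (\<phi> v)}" for v
  have "\<exists>b. bmodels b (R v)" if v: "v \<in> gvar F" for v
    using sat_minus[OF v \<phi>_dom[OF v]] unfolding R_def bsatisfiable_iff_bmodels .
  then obtain B where B: "\<forall>v\<in>gvar F. bmodels (B v) (R v)"
    using bchoice[of "gvar F" "\<lambda>v b. bmodels b (R v)"] by blast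
  obtain \<beta> where \<beta>: "\<forall>v\<in>gvar F. \<forall>x\<in>bvar (T v). \<beta> x = B v x"
    using ex_fun_agreeing_on_disjoint_family[of "gvar F" "\<lambda>v. bvar (T v)" B] disjoint by blast
  have R: "bmodels \<beta> (R v)" if v: "v \<in> gvar F" for v
  proof -
    have "bvar (R v) \<subseteq> bvar (T v)" unfolding R_def bvar_def by blast
    with \<beta> v have "\<forall>x\<in>bvar (R v). \<beta> x = B v x" by blast
    with B v show ?thesis using bmodels_cong by blast
  qed
  have "bsat_clause \<beta> (\<Union>(v, e)\<in>C. \<gamma> v e)" if C: "C \<in> F" for C
  proof -
    obtain v e where ve: "(v, e) \<in> C" "\<phi> v \<noteq> e"
      using \<phi> C unfolding gsat_assign_def by blast
    have v: "v \<in> gvar F" using C ve(1) unfolding gvar_def by force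
    have "e \<in> D v"
      using assms(1) C ve(1) unfolding gclause_set_def by blast
    then have "\<gamma> v e \<in> R v"
      using inj[OF v] codes[OF v] \<phi>_dom[OF v] ve(2) unfolding R_def inj_on_def by blast
    then have "bsat_clause \<beta> (\<gamma> v e)" using R[OF v] unfolding bmodels_def by blast
    then show ?thesis by (rule bsat_clause_mono) (use ve(1) in blast)
  qed
  moreover have "bsat_clause \<beta> C" if "v \<in> gvar F" "C \<in> T v - \<gamma> v ` D v" for v C
  proof -
    have "C \<in> R v" using \<phi>_dom that unfolding R_def by blast
    then show ?thesis using R[OF that(1)] unfolding bmodels_def by blast
  qed
  ultimately have "bmodels \<beta> (translate D F T \<gamma>)"
    unfolding bmodels_def translate_def by blast
  then show ?thesis unfolding bsatisfiable_iff_bmodels by blast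
qed

theorem lemma5:
  fixes D :: "'v \<Rightarrow> 'e set" and F :: "('v, 'e) gcls"
    and T :: "'v \<Rightarrow> 'b bcls" and \<gamma> :: "'v \<Rightarrow> 'e \<Rightarrow> 'b bclause"
  assumes "gclause_set D F"
    and "generic_translation D F T \<gamma>"
  shows "bsatisfiable (translate D F T \<gamma>) \<longleftrightarrow> gsatisfiable D F"
proof
  have "\<forall>v\<in>gvar F. \<not> bsatisfiable (T v)"
    using assms(2) unfolding generic_translation_def by (elim conjE) blast
  then show "bsatisfiable (translate D F T \<gamma>) \<Longrightarrow> gsatisfiable D F"
    by (rule translate_bsatisfiable_imp_gsatisfiable)
  show "gsatisfiable D F \<Longrightarrow> bsatisfiable (translate D F T \<gamma>)"
    using assms by (rule gsatisfiable_imp_translate_bsatisfiable)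
qed

end
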